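(* Let $R=(r_{ij})$ be a real symmetric $n\times n$ matrix with zero diagonal and $\rho(|R|)<1$, with belief-propagation estimate $Z^{\mathrm{bp}}$ and backtrackless adjacency matrix $R'$ (defined in the context). Then $$\det(I-R)^{-1}=Z^{\mathrm{bp}}\times\det(I-R')^{-1}.$$
   Context: $|R|=(|r_{ij}|)$, $\rho$ the spectral radius. $G$ is the graph on $V=\{1,\dots,n\}$ with undirected edge $\{i,j\}$ whenever $r_{ij}\neq0$; $\partial i$ is the neighbour set of $i$; each undirected edge gives directed edges $(ij),(ji)$. GaBP messages: $\alpha_{ij}=\lim_t\alpha^{(t)}_{ij}$ with $\alpha^{(0)}_{ij}=0$, $\alpha^{(t+1)}_{ij}=r_{ij}^2(1-\sum_{k\in\partial i\setminus j}\alpha^{(t)}_{ki})^{-1}$ (convergent when $\rho(|R|)<1$, with $1-\alpha_{i\setminus j}>0$); $\alpha_{i\setminus j}=\sum_{k\in\partial i\setminus j}\alpha_{ki}$. $Z_i^{\mathrm{bp}}=(1-\sum_{k\in\partial i}\alpha_{ki})^{-1}$, $Z_{ij}^{\mathrm{bp}}=\det\begin{pmatrix}1-\alpha_{i\setminus j} & -r_{ij}\\ -r_{ij} & 1-\alpha_{j\setminus i}\end{pmatrix}^{-1}$, $Z^{\mathrm{bp}}=\prod_{i\in V}Z_i^{\mathrm{bp}}\prod_{\{i,j\}\in G}\frac{Z_{ij}^{\mathrm{bp}}}{Z_i^{\mathrm{bp}}Z_j^{\mathrm{bp}}}$. Let $r'_{ij}=\frac{r_{ij}}{1-\alpha_{i\setminus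 j}}$. The matrix $R'$ has rows and columns indexed by directed edges of $G$, with $R'_{(ij),(kl)}=r'_{kl}$ if $j=k$ and $i\neq l$, and $0$ otherwise. *)

theory Defs
  imports "Jordan_Normal_Form.Spectral_Radius" "Jordan_Normal_Form.Determinant"
begin

definition nbrs :: "nat \<Rightarrow> real mat \<Rightarrow> nat \<Rightarrow> nat set" where
  "nbrs n R i = {k. k < n \<and> R $$ (i, k) \<noteq> 0}"

definition dir_edges :: "nat \<Rightarrow> real mat \<Rightarrow> (nat \<times> nat) set" where
  "dir_edges n R = {(i, j). i < n \<and> j < n \<and> R $$ (i, j) \<noteq> 0}"

definition undir_edges :: "nat \<Rightarrow> real mat \<Rightarrow> (nat \<times> nat) set" where
  "undir_edges n R = {(i, j). i < j \<and> j < n \<and> R $$ (i, j) \<noteq> 0}"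

fun alpha_iter :: "nat \<Rightarrow> real mat \<Rightarrow> nat \<Rightarrow> nat \<Rightarrow> nat \<Rightarrow> real" where
  "alpha_iter n R 0 i j = 0"
| "alpha_iter n R (Suc t) i j =
     (R $$ (i, j))\<^sup>2 / (1 - (\<Sum>k\<in>nbrs n R i - {j}. alpha_iter n R t k i))"

definition alpha :: "nat \<Rightarrow> real mat \<Rightarrow> nat \<Rightarrow> nat \<Rightarrow> real" where
  "alpha n R i j = lim (\<lambda>t. alpha_iter n R t i j)"

definition alpha_excl :: "nat \<Rightarrow> real mat \<Rightarrow> nat \<Rightarrow> nat \<Rightarrow> real" where
  "alpha_excl n R i j = (\<Sum>k\<in>nbrs n R i - {j}. alpha n R k i)"

definition Z_node :: "nat \<Rightarrow> real mat \<Rightarrow> nat \<Rightarrow> real" where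
  "Z_node n R i = inverse (1 - (\<Sum>k\<in>nbrs n R i. alpha n R k i))"

definition Z_edge :: "nat \<Rightarrow> real mat \<Rightarrow> nat \<Rightarrow> nat \<Rightarrow> real" where
  "Z_edge n R i j = inverse ((1 - alpha_excl n R i j) * (1 - alpha_excl n R j i)
                              - (- R $$ (i, j)) * (- R $$ (i, j)))"

definition Z_bp :: "nat \<Rightarrow> real mat \<Rightarrow> real" where
  "Z_bp n R = (\<Prod>i<n. Z_node n R i) *
     (\<Prod>(i, j)\<in>undir_edges n R. Z_edge n R i j / (Z_node n R i * Z_node n R j))"

definition r_prime :: "nat \<Rightarrow> real mat \<Rightarrow> nat \<Rightarrow> nat \<Rightarrow> real" where
  "r_prime n R k l = R $$ (k, l) / (1 - alpha_excl n R k l)"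

definition R_prime :: "nat \<Rightarrow> real mat \<Rightarrow> (nat \<times> nat) \<Rightarrow> (nat \<times> nat) \<Rightarrow> real" where
  "R_prime n R e f = (if snd e = fst f \<and> fst e \<noteq> snd f then r_prime n R (fst f) (snd f) else 0)"

definition det_on :: "'a set \<Rightarrow> ('a \<Rightarrow> 'a \<Rightarrow> real) \<Rightarrow> real" where
  "det_on S M = (\<Sum>p | p permutes S. of_int (sign p) * (\<Prod>x\<in>S. M x (p x)))"

end

theory Submission
  imports Defs
begin

text \<open>
  Since the spectral radius of |R| is below 1, a truncated Neumann series yields x > 0 with
  |R| x \<le> x - 1/2. This vector dominates the GaBP recursion: the messages increase in t and stay
  below |r_ij| x_i / x_j, so they converge to a fixed point at which the cavity precisions
  1 - \<alpha>_{i\j} and the marginal precisions D_i = 1 - \<Sum>_k \<alpha>_ki are positive, and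
  \<beta>_ij \<beta>_ji - r_ij^2 = D_i \<beta>_ji for \<beta>_ij = 1 - \<alpha>_{i\j}.

  Order the directed edges so that the two orientations of an edge are adjacent. Then
  I - R' = A - T W, where T W is the transfer matrix that allows backtracking and A is block
  diagonal with 2x2 blocks of determinant 1 - r'_ij r'_ji. By the Schur complement formula,
  det (I - R') = det A \<cdot> det (I - W A^-1 T); the fixed-point identities turn I - W A^-1 T into
  D^-1 (I - R) and each block determinant into D_i / \<beta>_ij, and the resulting constant is Z_bp.
\<close>

lemma pow_mat_smult:
  assumes "B \<in> carrier_mat n n"
  shows "(a \<cdot>\<^sub>m B) ^\<^sub>m k = a ^ k \<cdot>\<^sub>m (B ^\<^sub>m k :: 'a :: comm_ring_1 mat)"
proof (induction k)
  case 0 then show ?case using assms by (intro eq_matI) auto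
next
  case (Suc k)
  have "(a \<cdot>\<^sub>m B) ^\<^sub>m Suc k = (a ^ k \<cdot>\<^sub>m B ^\<^sub>m k) * (a \<cdot>\<^sub>m B)" using Suc by simp
  also have "\<dots> = a ^ k \<cdot>\<^sub>m (B ^\<^sub>m k * (a \<cdot>\<^sub>m B))"
    by (rule mult_smult_assoc_mat) (use assms in auto)
  also have "B ^\<^sub>m k * (a \<cdot>\<^sub>m B) = a \<cdot>\<^sub>m (B ^\<^sub>m k * B)"
    by (rule mult_smult_distrib) (use assms in auto)
  finally show ?case using assms by (intro eq_matI) (auto simp: ac_simps)
qed

lemma pow_mat_Suc_left:
  assumes "A \<in> carrier_mat n n"
  shows "A ^\<^sub>m Suc k = A * A ^\<^sub>m k"
proof (induction k)
  case 0 then show ?case using assms by simp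
next
  case (Suc k)
  have "A ^\<^sub>m Suc (Suc k) = (A * A ^\<^sub>m k) * A" using Suc by simp
  also have "\<dots> = A * A ^\<^sub>m Suc k" using assms by (simp add: assoc_mult_mat[of _ n n _ n _ n])
  finally show ?case .
qed

lemma pow_mat_nonneg:
  fixes A :: "'a :: linordered_semidom mat"
  assumes A: "A \<in> carrier_mat n n" and nonneg: "\<And>i j. i < n \<Longrightarrow> j < n \<Longrightarrow> A $$ (i, j) \<ge> 0"
    and "i < n" "j < n"
  shows "(A ^\<^sub>m k) $$ (i, j) \<ge> 0"
  using assms(3,4)
proof (induction k arbitrary: j)
  case 0 then show ?case using A by simp
next
  case (Suc k)
  have "(A ^\<^sub>m Suc k) $$ (i, j) = (\<Sum>l = 0..<n. (A ^\<^sub>m k) $$ (i, l) * A $$ (l, j))"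
    using A Suc.prems by (simp add: scalar_prod_def)
  also have "\<dots> \<ge> 0" using Suc nonneg by (intro sum_nonneg mult_nonneg_nonneg) auto
  finally show ?case .
qed

lemma eigenvalue_smult_matD:
  assumes B: "(B :: 'a :: field mat) \<in> carrier_mat n n"
    and ev: "eigenvalue (a \<cdot>\<^sub>m B) \<mu>" and a: "a \<noteq> 0"
  shows "eigenvalue B (\<mu> / a)"
proof -
  obtain v where v: "v \<in> carrier_vec n" "v \<noteq> 0\<^sub>v n" and eq: "(a \<cdot>\<^sub>m B) *\<^sub>v v = \<mu> \<cdot>\<^sub>v v"
    using ev B unfolding eigenvalue_def eigenvector_def by auto
  have "B *\<^sub>v v = (\<mu> / a) \<cdot>\<^sub>v v"
  proof (rule eq_vecI)
    fix i assume i: "i < dim_vec ((\<mu> / a) \<cdot>\<^sub>v v)"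
    have "a * (B *\<^sub>v v) $ i = \<mu> * v $ i"
      using arg_cong[OF eq, of "\<lambda>w. w $ i"] i B v
      by (simp add: scalar_prod_def sum_distrib_left ac_simps)
    then show "(B *\<^sub>v v) $ i = ((\<mu> / a) \<cdot>\<^sub>v v) $ i" using i a by (simp add: field_simps)
  qed (use B v in simp)
  then show ?thesis using v B unfolding eigenvalue_def eigenvector_def by auto
qed

lemma spectral_radius_smult_le:
  assumes B: "B \<in> carrier_mat n n" and n: "n > 0" and c: "c \<noteq> 0"
  shows "spectral_radius (c \<cdot>\<^sub>m B) \<le> norm c * spectral_radius B"
proof -
  have cB: "c \<cdot>\<^sub>m B \<in> carrier_mat n n" using B by simp
  obtain \<mu> where \<mu>: "eigenvalue (c \<cdot>\<^sub>m B) \<mu>" and sr: "spectral_radius (c \<cdot>\<^sub>m B) = norm \<mu>"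
    using spectral_radius_mem_max(1)[OF cB n] unfolding spectrum_def by auto
  have "norm (\<mu> / c) \<le> spectral_radius B"
    using eigenvalue_smult_matD[OF B \<mu> c]
    by (intro spectral_radius_mem_max(2)[OF B n]) (auto simp: spectrum_def)
  then show ?thesis using c by (simp add: sr norm_divide field_simps)
qed

lemma spectral_radius_less_1_geometric_decay:
  assumes B: "(B :: complex mat) \<in> carrier_mat n n" and n: "n > 0" and sr: "spectral_radius B < 1"
  obtains s c where "0 < s" "s < 1"
    "\<And>k i j. i < n \<Longrightarrow> j < n \<Longrightarrow> norm ((B ^\<^sub>m k) $$ (i, j)) \<le> c * s ^ k"
proof -
  have "norm ` spectrum B \<noteq> {}" using spectrum_non_empty[OF B n] by auto
  then have sr0: "spectral_radius B \<ge> 0"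
    using spectral_radius_mem_max(1)[OF B n] by auto
  define s where "s = (1 + spectral_radius B) / 2"
  have s: "0 < s" "s < 1" "spectral_radius B < s" using sr0 sr unfolding s_def by auto
  \<comment> \<open>the rescaled matrix still has spectral radius below 1, hence bounded powers\<close>
  define C where "C = complex_of_real (1 / s) \<cdot>\<^sub>m B"
  have C: "C \<in> carrier_mat n n" using B unfolding C_def by simp
  have "spectral_radius C \<le> (1 / s) * spectral_radius B"
    using spectral_radius_smult_le[OF B n, of "complex_of_real (1 / s)"] s
    unfolding C_def by (simp add: norm_divide)
  also have "\<dots> < 1" using s by (simp add: field_simps)
  finally obtain c where c: "\<And>k. norm_bound (C ^\<^sub>m k) c"
    using spectral_radius_jnf_norm_bound_less_1_upper_triangular[OF C] by blast
  have "norm ((B ^\<^sub>m k) $$ (i, j)) \<le> c * s ^ k" if ij: "i < n" "j < n" for k i j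
  proof -
    have "norm ((C ^\<^sub>m k) $$ (i, j)) = norm ((B ^\<^sub>m k) $$ (i, j)) / s ^ k"
      unfolding C_def pow_mat_smult[OF B] using ij B s
      by (simp add: norm_mult norm_power norm_divide power_one_over)
    moreover have "norm ((C ^\<^sub>m k) $$ (i, j)) \<le> c" using c[of k] ij C unfolding norm_bound_def by auto
    ultimately show ?thesis using s by (simp add: pos_divide_le_eq)
  qed
  with s that show ?thesis by blast
qed

lemma nonneg_pow_mat_entries_eventually_le:
  fixes A :: "real mat"
  assumes A: "A \<in> carrier_mat n n" and nonneg: "\<And>i j. i < n \<Longrightarrow> j < n \<Longrightarrow> A $$ (i, j) \<ge> 0"
    and sr: "spectral_radius (map_mat complex_of_real A) < 1" and e: "e > 0"
  obtains N where "\<And>k i j. N \<le> k \<Longrightarrow> i < n \<Longrightarrow> j < n \<Longrightarrow> (A ^\<^sub>m k) $$ (i, j) \<le> e"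
proof (cases "n = 0")
  case True then show ?thesis using that by auto
next
  case False
  have powA: "map_mat complex_of_real (A ^\<^sub>m k) = map_mat complex_of_real A ^\<^sub>m k" for k
    using of_real_hom.mat_hom_pow[OF A] by metis
  obtain s c where s: "0 < s" "s < 1"
    and decay: "\<And>k i j. i < n \<Longrightarrow> j < n \<Longrightarrow> norm ((map_mat complex_of_real A ^\<^sub>m k) $$ (i, j)) \<le> c * s ^ k"
    using spectral_radius_less_1_geometric_decay[OF _ _ sr] A False by auto
  have "(\<lambda>k. c * s ^ k) \<longlonglongrightarrow> c * 0"
    by (intro tendsto_mult tendsto_const LIMSEQ_power_zero) (use s in auto)
  then have "eventually (\<lambda>k. c * s ^ k < e) sequentially"
    using e by (intro order_tendstoD(2)) auto
  then obtain N where N: "\<And>k. N \<le> k \<Longrightarrow> c * s ^ k < e"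
    unfolding eventually_sequentially by blast
  have "(A ^\<^sub>m k) $$ (i, j) \<le> e" if "N \<le> k" "i < n" "j < n" for k i j
    using decay[OF that(2,3), of k] pow_mat_nonneg[OF A nonneg that(2,3), of k] A that N[OF that(1)]
    by (simp flip: powA)
  then show ?thesis by (rule that)
qed

lemma nonneg_supersolution_of_spectral_radius_less_1:
  fixes A :: "real mat"
  assumes A: "A \<in> carrier_mat n n" and nonneg: "\<And>i j. i < n \<Longrightarrow> j < n \<Longrightarrow> A $$ (i, j) \<ge> 0"
    and sr: "spectral_radius (map_mat complex_of_real A) < 1"
  obtains x where "\<And>i. i < n \<Longrightarrow> x i > 0"
    and "\<And>i. i < n \<Longrightarrow> (\<Sum>j = 0..<n. A $$ (i, j) * x j) \<le> x i - 1 / 2"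
proof (cases "n = 0")
  case True then show ?thesis using that by auto
next
  case False
  then have n: "n > 0" by simp
  obtain N where N: "\<And>k i j. N \<le> k \<Longrightarrow> i < n \<Longrightarrow> j < n \<Longrightarrow> (A ^\<^sub>m k) $$ (i, j) \<le> 1 / (2 * real n)"
    using nonneg_pow_mat_entries_eventually_le[OF A nonneg sr, of "1 / (2 * real n)"] n by auto
  \<comment> \<open>x is a truncated Neumann series: the row sums of I + A + ... + A^N\<close>
  define y where "y k i = (\<Sum>l = 0..<n. (A ^\<^sub>m k) $$ (i, l))" for k i
  define x where "x i = (\<Sum>k<Suc N. y k i)" for i
  have y0: "y 0 i = 1" if "i < n" for i
    using that A by (simp add: y_def one_mat_def sum.delta' cong: if_cong)
  have y_nonneg: "y k i \<ge> 0" if "i < n" for k i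
    unfolding y_def using pow_mat_nonneg[OF A nonneg] that by (intro sum_nonneg) auto
  have y_Suc_N: "y (Suc N) i \<le> 1 / 2" if i: "i < n" for i
  proof -
    have "y (Suc N) i \<le> (\<Sum>l = 0..<n. 1 / (2 * real n))"
      unfolding y_def using N[of "Suc N" i] i by (intro sum_mono) simp
    also have "\<dots> = 1 / 2" using n by simp
    finally show ?thesis .
  qed
  have y_Suc: "(\<Sum>j = 0..<n. A $$ (i, j) * y k j) = y (Suc k) i" if i: "i < n" for i k
  proof -
    have "(\<Sum>j = 0..<n. A $$ (i, j) * y k j) = (\<Sum>l = 0..<n. \<Sum>j = 0..<n. A $$ (i, j) * (A ^\<^sub>m k) $$ (j, l))"
      unfolding y_def sum_distrib_left by (rule sum.swap)
    also have "\<dots> = y (Suc k) i"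
      unfolding y_def pow_mat_Suc_left[OF A] using A i by (intro sum.cong) (auto simp: scalar_prod_def)
    finally show ?thesis .
  qed
  show ?thesis
  proof (rule that)
    fix i assume i: "i < n"
    have "y 0 i \<le> x i" unfolding x_def using y_nonneg[OF i] by (intro member_le_sum) auto
    then show "x i > 0" using y0[OF i] by simp
  next
    fix i assume i: "i < n"
    have "(\<Sum>j = 0..<n. A $$ (i, j) * x j) = (\<Sum>k<Suc N. \<Sum>j = 0..<n. A $$ (i, j) * y k j)"
      unfolding x_def sum_distrib_left by (rule sum.swap)
    also have "\<dots> = (\<Sum>k<Suc N. y (Suc k) i)" using y_Suc[OF i] by simp
    also have "\<dots> = (\<Sum>k<Suc (Suc N). y k i) - y 0 i"
      by (subst sum.lessThan_Suc_shift) simp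
    also have "\<dots> = x i + y (Suc N) i - y 0 i" unfolding x_def by simp
    also have "\<dots> \<le> x i - 1 / 2" using y0[OF i] y_Suc_N[OF i] by simp
    finally show "(\<Sum>j = 0..<n. A $$ (i, j) * x j) \<le> x i - 1 / 2" .
  qed
qed

lemma bij_betw_map_permutation:
  assumes bij: "bij_betw g A S"
  shows "bij_betw (map_permutation A g) {p. p permutes A} {q. q permutes S}"
proof (rule bij_betw_byWitness[where f' = "map_permutation S (inv_into A g)"])
  have bij': "bij_betw (inv_into A g) S A" using bij by (rule bij_betw_inv_into)
  show "\<forall>p\<in>{p. p permutes A}. map_permutation S (inv_into A g) (map_permutation A g p) = p"
    using bij by (auto intro: map_permutation_compose_inv simp: bij_betw_def)
  show "\<forall>q\<in>{q. q permutes S}. map_permutation A g (map_permutation S (inv_into A g) q) = q"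
    using bij' bij by (auto intro: map_permutation_compose_inv simp: bij_betw_inv_into_right)
  show "map_permutation A g ` {p. p permutes A} \<subseteq> {q. q permutes S}"
    using map_permutation_permutes[OF bij] by auto
  show "map_permutation S (inv_into A g) ` {q. q permutes S} \<subseteq> {p. p permutes A}"
    using map_permutation_permutes[OF bij'] by auto
qed

lemma det_on_reindex:
  assumes bij: "bij_betw g {0..<k} S"
  shows "det_on S M = det (mat k k (\<lambda>(a, b). M (g a) (g b)))"
proof -
  let ?A = "{0..<k}"
  have inj: "inj_on g ?A" using bij by (auto simp: bij_betw_def)
  have "det_on S M = (\<Sum>p | p permutes ?A. of_int (sign (map_permutation ?A g p))
      * (\<Prod>x\<in>S. M x (map_permutation ?A g p x)))"
    unfolding det_on_def
    using sum.reindex_bij_betw[OF bij_betw_map_permutation[OF bij],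
        of "\<lambda>q. of_int (sign q) * (\<Prod>x\<in>S. M x (q x))"]
    by simp
  also have "\<dots> = (\<Sum>p | p permutes ?A. of_int (sign p) * (\<Prod>i\<in>?A. M (g i) (g (p i))))"
  proof (rule sum.cong)
    fix p assume p: "p \<in> {p. p permutes ?A}"
    have "sign (map_permutation ?A g p) = sign p"
      by (rule sign_map_permutation) (use inj p in auto)
    moreover have "(\<Prod>x\<in>S. M x (map_permutation ?A g p x)) = (\<Prod>i\<in>?A. M (g i) (g (p i)))"
      using prod.reindex_bij_betw[OF bij, of "\<lambda>x. M x (map_permutation ?A g p x)"] inj
      by (simp add: map_permutation_apply)
    ultimately show "of_int (sign (map_permutation ?A g p)) * (\<Prod>x\<in>S. M x (map_permutation ?A g p x))
        = of_int (sign p) * (\<Prod>i\<in>?A. M (g i) (g (p i)))"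
      by simp
  qed simp
  also have "\<dots> = det (mat k k (\<lambda>(a, b). M (g a) (g b)))"
    unfolding det_def'[OF mat_carrier]
  proof (rule sum.cong)
    fix p assume p: "p \<in> {p. p permutes ?A}"
    then have "\<And>i. i \<in> ?A \<Longrightarrow> p i \<in> ?A" using permutes_in_image by auto
    then show "of_int (sign p) * (\<Prod>i\<in>?A. M (g i) (g (p i))) =
        signof p * (\<Prod>i = 0..<k. mat k k (\<lambda>(a, b). M (g a) (g b)) $$ (i, p i))"
      by (simp add: sign_def)
  qed simp
  finally show ?thesis .
qed

lemma nbrs_subset: "nbrs n R i \<subseteq> {..<n}"
  by (auto simp: nbrs_def)

lemma finite_nbrs: "finite (nbrs n R i)"
  by (rule finite_subset[OF nbrs_subset]) simp

text \<open>A positive supersolution x of |R| x \<le> x - 1/2 dominates the GaBP messages: the bound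
  \<alpha>_ki \<le> |r_ki| x_k / x_i is preserved by the update and keeps every denominator
  1 - \<alpha>_{i\j} above (1/2 + |r_ij| x_j) / x_i.\<close>

context
  fixes n :: nat and R :: "real mat" and x :: "nat \<Rightarrow> real"
  assumes sym: "\<forall>i<n. \<forall>j<n. R $$ (i, j) = R $$ (j, i)"
    and x_pos: "\<forall>i<n. x i > 0"
    and supersolution: "\<forall>i<n. (\<Sum>j = 0..<n. \<bar>R $$ (i, j)\<bar> * x j) \<le> x i - 1 / 2"
begin

lemma sum_nbrs_dominated_le:
  assumes a: "\<And>k. k < n \<Longrightarrow> a k \<le> \<bar>R $$ (k, i)\<bar> * x k / x i" and i: "i < n"
    and S: "S \<subseteq> nbrs n R i"
  shows "(\<Sum>k\<in>S. a k) \<le> (\<Sum>k\<in>S. \<bar>R $$ (i, k)\<bar> * x k) / x i"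
proof -
  have "(\<Sum>k\<in>S. a k) \<le> (\<Sum>k\<in>S. \<bar>R $$ (i, k)\<bar> * x k / x i)"
  proof (rule sum_mono)
    fix k assume "k \<in> S"
    then have k: "k < n" using S by (auto simp: nbrs_def)
    then show "a k \<le> \<bar>R $$ (i, k)\<bar> * x k / x i" using a[OF k] sym i by auto
  qed
  then show ?thesis by (simp add: sum_divide_distrib)
qed

lemma one_minus_sum_excl_ge:
  assumes a: "\<And>k. k < n \<Longrightarrow> a k \<le> \<bar>R $$ (k, i)\<bar> * x k / x i"
    and i: "i < n" and j: "j < n"
  shows "1 - (\<Sum>k\<in>nbrs n R i - {j}. a k) \<ge> (1 / 2 + \<bar>R $$ (i, j)\<bar> * x j) / x i"
proof -
  have xi: "x i > 0" using x_pos i by auto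
  have "\<bar>R $$ (i, j)\<bar> * x j + (\<Sum>k\<in>nbrs n R i - {j}. \<bar>R $$ (i, k)\<bar> * x k)
      = (\<Sum>k\<in>insert j (nbrs n R i - {j}). \<bar>R $$ (i, k)\<bar> * x k)"
    using finite_nbrs by (simp add: sum.insert_remove)
  also have "\<dots> \<le> (\<Sum>k = 0..<n. \<bar>R $$ (i, k)\<bar> * x k)"
    using j x_pos by (intro sum_mono2) (auto simp: nbrs_def intro: less_imp_le)
  also have "\<dots> \<le> x i - 1 / 2" using supersolution i by blast
  finally have sum_le: "(\<Sum>k\<in>nbrs n R i - {j}. \<bar>R $$ (i, k)\<bar> * x k) \<le> x i - 1 / 2 - \<bar>R $$ (i, j)\<bar> * x j"
    by linarith
  have "(\<Sum>k\<in>nbrs n R i - {j}. a k) \<le> (\<Sum>k\<in>nbrs n R i - {j}. \<bar>R $$ (i, k)\<bar> * x k) / x i"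
    by (intro sum_nbrs_dominated_le a i) auto
  also have "\<dots> \<le> (x i - 1 / 2 - \<bar>R $$ (i, j)\<bar> * x j) / x i"
    using sum_le xi by (intro divide_right_mono) auto
  also have "\<dots> = 1 - (1 / 2 + \<bar>R $$ (i, j)\<bar> * x j) / x i"
    using xi by (simp add: field_simps)
  finally show ?thesis by simp
qed

lemma sum_nbrs_dominated_less_1:
  assumes a: "\<And>k. k < n \<Longrightarrow> a k \<le> \<bar>R $$ (k, i)\<bar> * x k / x i" and i: "i < n"
  shows "(\<Sum>k\<in>nbrs n R i. a k) < 1"
proof -
  have xi: "x i > 0" using x_pos i by auto
  have "(\<Sum>k\<in>nbrs n R i. \<bar>R $$ (i, k)\<bar> * x k) \<le> (\<Sum>k = 0..<n. \<bar>R $$ (i, k)\<bar> * x k)"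
    using x_pos by (intro sum_mono2) (auto simp: nbrs_def intro: less_imp_le)
  also have "\<dots> \<le> x i - 1 / 2" using supersolution i by blast
  finally have sum_le: "(\<Sum>k\<in>nbrs n R i. \<bar>R $$ (i, k)\<bar> * x k) \<le> x i - 1 / 2" .
  have "(\<Sum>k\<in>nbrs n R i. a k) \<le> (\<Sum>k\<in>nbrs n R i. \<bar>R $$ (i, k)\<bar> * x k) / x i"
    by (intro sum_nbrs_dominated_le a i) auto
  also have "\<dots> \<le> (x i - 1 / 2) / x i"
    using sum_le xi by (intro divide_right_mono) auto
  also have "\<dots> < 1" using xi by (simp add: field_simps)
  finally show ?thesis .
qed

lemma gabp_step_bounds:
  assumes i: "i < n" and j: "j < n" and D: "D \<ge> (1 / 2 + \<bar>r\<bar> * x j) / x i"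
  shows "0 \<le> r\<^sup>2 / D \<and> r\<^sup>2 / D \<le> \<bar>r\<bar> * x i / x j"
proof -
  have xi: "x i > 0" and xj: "x j > 0" using x_pos i j by auto
  have "(1 / 2 + \<bar>r\<bar> * x j) / x i > 0" using xi xj by (intro divide_pos_pos add_pos_nonneg) auto
  then have D0: "D > 0" using D by linarith
  have "x i * D \<ge> 1 / 2 + \<bar>r\<bar> * x j" using D xi by (simp add: field_simps)
  then have "\<bar>r\<bar> * (x i * D) \<ge> \<bar>r\<bar> * (\<bar>r\<bar> * x j)" by (intro mult_left_mono) auto
  then have "r\<^sup>2 * x j \<le> \<bar>r\<bar> * x i * D" by (simp add: power2_eq_square algebra_simps)
  then show ?thesis using D0 xj by (simp add: field_simps)
qed

lemma alpha_iter_bounds: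
  "\<forall>i<n. \<forall>j<n. 0 \<le> alpha_iter n R t i j \<and> alpha_iter n R t i j \<le> \<bar>R $$ (i, j)\<bar> * x i / x j"
proof (induction t)
  case 0 then show ?case
    using x_pos by (auto intro!: divide_nonneg_pos mult_nonneg_nonneg intro: less_imp_le)
next
  case (Suc t)
  show ?case
  proof (intro allI impI)
    fix i j assume i: "i < n" and j: "j < n"
    have "1 - (\<Sum>k\<in>nbrs n R i - {j}. alpha_iter n R t k i) \<ge> (1 / 2 + \<bar>R $$ (i, j)\<bar> * x j) / x i"
      by (rule one_minus_sum_excl_ge[OF _ i j]) (use Suc i in auto)
    from gabp_step_bounds[OF i j this]
    show "0 \<le> alpha_iter n R (Suc t) i j \<and> alpha_iter n R (Suc t) i j \<le> \<bar>R $$ (i, j)\<bar> * x i / x j"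
      by simp
  qed
qed

lemma alpha_iter_mono:
  "\<forall>i<n. \<forall>j<n. alpha_iter n R t i j \<le> alpha_iter n R (Suc t) i j"
proof (induction t)
  case 0 then show ?case using alpha_iter_bounds[of 1] by auto
next
  case (Suc t)
  show ?case
  proof (intro allI impI)
    fix i j assume i: "i < n" and j: "j < n"
    have le: "(\<Sum>k\<in>nbrs n R i - {j}. alpha_iter n R t k i) \<le> (\<Sum>k\<in>nbrs n R i - {j}. alpha_iter n R (Suc t) k i)"
      by (rule sum_mono) (use Suc i in \<open>auto simp: nbrs_def\<close>)
    have "(1 / 2 + \<bar>R $$ (i, j)\<bar> * x j) / x i \<le> 1 - (\<Sum>k\<in>nbrs n R i - {j}. alpha_iter n R (Suc t) k i)"
      by (rule one_minus_sum_excl_ge[OF _ i j]) (use alpha_iter_bounds[of "Suc t"] i in blast)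
    moreover have "(1 / 2 + \<bar>R $$ (i, j)\<bar> * x j) / x i > 0"
      using x_pos i j by (intro divide_pos_pos add_pos_nonneg) auto
    ultimately have "(R $$ (i, j))\<^sup>2 / (1 - (\<Sum>k\<in>nbrs n R i - {j}. alpha_iter n R t k i))
      \<le> (R $$ (i, j))\<^sup>2 / (1 - (\<Sum>k\<in>nbrs n R i - {j}. alpha_iter n R (Suc t) k i))"
      using le by (intro divide_left_mono) auto
    then show "alpha_iter n R (Suc t) i j \<le> alpha_iter n R (Suc (Suc t)) i j" by simp
  qed
qed

lemma alpha_iter_tendsto:
  assumes i: "i < n" and j: "j < n"
  shows "(\<lambda>t. alpha_iter n R t i j) \<longlonglongrightarrow> alpha n R i j"
proof -
  have "incseq (\<lambda>t. alpha_iter n R t i j)"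
    using alpha_iter_mono i j by (intro incseq_SucI) auto
  moreover have "\<forall>t. alpha_iter n R t i j \<le> \<bar>R $$ (i, j)\<bar> * x i / x j"
    using alpha_iter_bounds i j by blast
  ultimately obtain L where L: "(\<lambda>t. alpha_iter n R t i j) \<longlonglongrightarrow> L"
    using incseq_convergent by blast
  then show ?thesis unfolding alpha_def by (simp add: limI)
qed

lemma alpha_bounds:
  assumes i: "i < n" and j: "j < n"
  shows "0 \<le> alpha n R i j \<and> alpha n R i j \<le> \<bar>R $$ (i, j)\<bar> * x i / x j"
proof
  show "0 \<le> alpha n R i j"
    by (rule LIMSEQ_le_const[OF alpha_iter_tendsto[OF i j]]) (use alpha_iter_bounds i j in auto)
  show "alpha n R i j \<le> \<bar>R $$ (i, j)\<bar> * x i / x j"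
    by (rule LIMSEQ_le_const2[OF alpha_iter_tendsto[OF i j]]) (use alpha_iter_bounds i j in auto)
qed

lemma one_minus_alpha_excl_pos:
  assumes i: "i < n" and j: "j < n"
  shows "1 - alpha_excl n R i j > 0"
proof -
  have "1 - alpha_excl n R i j \<ge> (1 / 2 + \<bar>R $$ (i, j)\<bar> * x j) / x i"
    unfolding alpha_excl_def by (rule one_minus_sum_excl_ge[OF _ i j]) (use alpha_bounds i in auto)
  moreover have "(1 / 2 + \<bar>R $$ (i, j)\<bar> * x j) / x i > 0"
    using x_pos i j by (intro divide_pos_pos add_pos_nonneg) auto
  ultimately show ?thesis by linarith
qed

lemma one_minus_alpha_sum_pos:
  assumes i: "i < n"
  shows "1 - (\<Sum>k\<in>nbrs n R i. alpha n R k i) > 0"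
proof -
  have "(\<Sum>k\<in>nbrs n R i. alpha n R k i) < 1"
    by (rule sum_nbrs_dominated_less_1[OF _ i]) (use alpha_bounds i in blast)
  then show ?thesis by simp
qed

lemma alpha_fixed_point:
  assumes i: "i < n" and j: "j < n"
  shows "alpha n R i j = (R $$ (i, j))\<^sup>2 / (1 - alpha_excl n R i j)"
proof -
  have "(\<lambda>t. alpha_iter n R (Suc t) i j) \<longlonglongrightarrow> alpha n R i j"
    using alpha_iter_tendsto[OF i j] by (rule LIMSEQ_Suc)
  moreover have "(\<lambda>t. alpha_iter n R (Suc t) i j) \<longlonglongrightarrow> (R $$ (i, j))\<^sup>2 / (1 - alpha_excl n R i j)"
    unfolding alpha_iter.simps alpha_excl_def
  proof (intro tendsto_divide tendsto_const tendsto_diff tendsto_sum)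
    fix k assume "k \<in> nbrs n R i - {j}"
    then have k: "k < n" by (auto simp: nbrs_def)
    show "(\<lambda>t. alpha_iter n R t k i) \<longlonglongrightarrow> alpha n R k i" by (rule alpha_iter_tendsto[OF k i])
  next
    show "1 - (\<Sum>k\<in>nbrs n R i - {j}. alpha n R k i) \<noteq> 0"
      using one_minus_alpha_excl_pos[OF i j] by (simp add: alpha_excl_def)
  qed
  ultimately show ?thesis by (rule LIMSEQ_unique)
qed

end

text \<open>Both sides are the determinant of the block matrix [A T; W 1], factored in two ways.\<close>
lemma det_minus_mult_eq_schur_complement:
  fixes A :: "'a :: idom mat"
  assumes A: "A \<in> carrier_mat m m" and Ai: "Ai \<in> carrier_mat m m" and inv: "A * Ai = 1\<^sub>m m"
    and T: "T \<in> carrier_mat m n" and W: "W \<in> carrier_mat n m"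
  shows "det (A - T * W) = det A * det (1\<^sub>m n - W * (Ai * T))"
proof -
  have ATW: "A - T * W \<in> carrier_mat m m" using T W by (intro minus_carrier_mat mult_carrier_mat)
  have TW: "T * W \<in> carrier_mat m m" and AiT: "Ai * T \<in> carrier_mat m n" using T W Ai by auto
  have S: "1\<^sub>m n - W * (Ai * T) \<in> carrier_mat n n"
    using W AiT by (intro minus_carrier_mat mult_carrier_mat[of _ n m])
  define M where "M = four_block_mat A T W (1\<^sub>m n)"
  have "four_block_mat (1\<^sub>m m) T (0\<^sub>m n m) (1\<^sub>m n) * four_block_mat (A - T * W) (0\<^sub>m m n) W (1\<^sub>m n)
     = four_block_mat (1\<^sub>m m * (A - T * W) + T * W) (1\<^sub>m m * 0\<^sub>m m n + T * 1\<^sub>m n)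
         (0\<^sub>m n m * (A - T * W) + 1\<^sub>m n * W) (0\<^sub>m n m * 0\<^sub>m m n + 1\<^sub>m n * 1\<^sub>m n)"
    by (rule mult_four_block_mat[OF one_carrier_mat T zero_carrier_mat one_carrier_mat
          ATW zero_carrier_mat W one_carrier_mat])
  also have "\<dots> = M"
  proof -
    have "1\<^sub>m m * (A - T * W) + T * W = A"
      using A ATW T W by (subst left_mult_one_mat[of _ m m]) (auto intro!: eq_matI)
    then show ?thesis unfolding M_def using T W ATW by simp
  qed
  finally have "M = four_block_mat (1\<^sub>m m) T (0\<^sub>m n m) (1\<^sub>m n) * four_block_mat (A - T * W) (0\<^sub>m m n) W (1\<^sub>m n)" ..
  also have "det \<dots> = det (A - T * W)"
  proof -
    have "four_block_mat (1\<^sub>m m) T (0\<^sub>m n m) (1\<^sub>m n) \<in> carrier_mat (m + n) (m + n)"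
      and "four_block_mat (A - T * W) (0\<^sub>m m n) W (1\<^sub>m n) \<in> carrier_mat (m + n) (m + n)"
      using ATW by auto
    from det_mult[OF this] show ?thesis
      using det_four_block_mat_lower_left_zero[OF one_carrier_mat T refl one_carrier_mat]
        det_four_block_mat_upper_right_zero[OF ATW refl W one_carrier_mat]
      by simp
  qed
  finally have detM_1: "det M = det (A - T * W)" .
  have "four_block_mat A (0\<^sub>m m n) W (1\<^sub>m n - W * (Ai * T)) * four_block_mat (1\<^sub>m m) (Ai * T) (0\<^sub>m n m) (1\<^sub>m n)
     = four_block_mat (A * 1\<^sub>m m + 0\<^sub>m m n * 0\<^sub>m n m) (A * (Ai * T) + 0\<^sub>m m n * 1\<^sub>m n)
         (W * 1\<^sub>m m + (1\<^sub>m n - W * (Ai * T)) * 0\<^sub>m n m) (W * (Ai * T) + (1\<^sub>m n - W * (Ai * T)) * 1\<^sub>m n)"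
    by (rule mult_four_block_mat[OF A zero_carrier_mat W S
          one_carrier_mat AiT zero_carrier_mat one_carrier_mat])
  also have "\<dots> = M"
  proof -
    have "A * (Ai * T) = T" using A Ai T inv by (simp add: assoc_mult_mat[symmetric, of A m m Ai m T n])
    moreover have "W * (Ai * T) + (1\<^sub>m n - W * (Ai * T)) * 1\<^sub>m n = 1\<^sub>m n"
      using W AiT S by (intro eq_matI) auto
    ultimately show ?thesis unfolding M_def using A W T AiT S by simp
  qed
  finally have "M = four_block_mat A (0\<^sub>m m n) W (1\<^sub>m n - W * (Ai * T)) * four_block_mat (1\<^sub>m m) (Ai * T) (0\<^sub>m n m) (1\<^sub>m n)" ..
  also have "det \<dots> = det A * det (1\<^sub>m n - W * (Ai * T))"
  proof -
    have "four_block_mat A (0\<^sub>m m n) W (1\<^sub>m n - W * (Ai * T)) \<in> carrier_mat (m + n) (m + n)"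
      and "four_block_mat (1\<^sub>m m) (Ai * T) (0\<^sub>m n m) (1\<^sub>m n) \<in> carrier_mat (m + n) (m + n)"
      using A S by auto
    from det_mult[OF this] show ?thesis
      using det_four_block_mat_upper_right_zero[OF A refl W S]
        det_four_block_mat_lower_left_zero[OF one_carrier_mat AiT refl one_carrier_mat]
      by simp
  qed
  finally show ?thesis using detM_1 by simp
qed

lemma sum_eq_single_point:
  assumes "finite S" "a \<in> S" "\<And>c. c \<in> S \<Longrightarrow> c \<noteq> a \<Longrightarrow> f c = 0"
  shows "sum f S = f a"
  using assms by (subst sum.mono_neutral_right[of S "{a}"]) auto

lemma sum_eq_two_points:
  assumes "finite S" "a \<in> S" "b \<in> S" "a \<noteq> b" "\<And>c. c \<in> S \<Longrightarrow> c \<noteq> a \<Longrightarrow> c \<noteq> b \<Longrightarrow> f c = 0"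
  shows "sum f S = f a + f b"
  using assms by (subst sum.mono_neutral_right[of S "{a, b}"]) auto

lemma prod_lessThan_double:
  fixes f :: "nat \<Rightarrow> 'a :: comm_monoid_mult"
  shows "(\<Prod>a<2 * k. f a) = (\<Prod>j<k. f (2 * j) * f (2 * j + 1))"
proof (induction k)
  case 0
  then show ?case by simp
next
  case (Suc k)
  have "{..<2 * Suc k} = insert (2 * k + 1) (insert (2 * k) {..<2 * k})" by auto
  then show ?case using Suc by (simp add: ac_simps)
qed

lemma index_mult_mat_mat:
  assumes "i < nr" "j < nc"
  shows "(mat nr k f * mat k nc h) $$ (i, j) = (\<Sum>c = 0..<k. f (i, c) * h (c, j))"
  using assms by (simp add: scalar_prod_def)

lemma det_diagonal:
  assumes "A \<in> carrier_mat k k" "\<And>i j. i < k \<Longrightarrow> j < k \<Longrightarrow> i \<noteq> j \<Longrightarrow> A $$ (i, j) = 0"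
  shows "det A = (\<Prod>i<k. A $$ (i, i))"
proof -
  have "upper_triangular A" using assms by (auto simp: upper_triangular_def)
  then show ?thesis
    using det_upper_triangular[of A k] assms(1) by (simp add: prod_list_diag_prod atLeast0LessThan)
qed

lemma finite_dir_edges: "finite (dir_edges n R)"
  by (rule finite_subset[of _ "{..<n} \<times> {..<n}"]) (auto simp: dir_edges_def)

lemma finite_undir_edges: "finite (undir_edges n R)"
  by (rule finite_subset[of _ "{..<n} \<times> {..<n}"]) (auto simp: undir_edges_def)

lemma undir_edges_subset: "undir_edges n R \<subseteq> dir_edges n R"
  by (auto simp: dir_edges_def undir_edges_def)

lemma nbrs_imp_dir_edge: "i < n \<Longrightarrow> k \<in> nbrs n R i \<Longrightarrow> (i, k) \<in> dir_edges n R"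
  by (auto simp: nbrs_def dir_edges_def)

locale weighted_ihara_bass =
  fixes n :: nat and R :: "real mat" and \<beta> :: "nat \<Rightarrow> nat \<Rightarrow> real" and D :: "nat \<Rightarrow> real"
  assumes carrier: "R \<in> carrier_mat n n"
    and sym: "\<And>i j. i < n \<Longrightarrow> j < n \<Longrightarrow> R $$ (i, j) = R $$ (j, i)"
    and diag_zero: "\<And>i. i < n \<Longrightarrow> R $$ (i, i) = 0"
    and D_pos: "\<And>i. i < n \<Longrightarrow> D i > 0"
    and \<beta>_pos: "\<And>i j. (i, j) \<in> dir_edges n R \<Longrightarrow> \<beta> i j > 0"
    and \<beta>_product: "\<And>i j. (i, j) \<in> dir_edges n R \<Longrightarrow> \<beta> i j * \<beta> j i - (R $$ (i, j))\<^sup>2 = D i * \<beta> j i"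
    and weighted_degree: "\<And>i. i < n \<Longrightarrow> (\<Sum>k\<in>nbrs n R i. (R $$ (i, k))\<^sup>2 / \<beta> k i) = 1 - D i"
begin

abbreviation "E \<equiv> dir_edges n R"
abbreviation "U \<equiv> undir_edges n R"
abbreviation "m \<equiv> 2 * card U"

definition weight :: "nat \<times> nat \<Rightarrow> real" where
  "weight e = R $$ e / \<beta> (fst e) (snd e)"

definition backtrackless :: "nat \<times> nat \<Rightarrow> nat \<times> nat \<Rightarrow> real" where
  "backtrackless e f = (if snd e = fst f \<and> fst e \<noteq> snd f then weight f else 0)"

definition edge_factor :: "nat \<times> nat \<Rightarrow> real" where
  "edge_factor e = 1 - weight e * weight (prod.swap e)"

lemma dir_edges_swap: "e \<in> E \<Longrightarrow> prod.swap e \<in> E"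
  using sym by (auto simp: dir_edges_def)

lemma dir_edges_fst_neq_snd: "e \<in> E \<Longrightarrow> fst e \<noteq> snd e"
  using diag_zero by (auto simp: dir_edges_def)

lemma edge_factor_eq:
  assumes e: "(i, j) \<in> E"
  shows "edge_factor (i, j) = D i / \<beta> i j"
proof -
  have ij: "i < n" "j < n" using e by (auto simp: dir_edges_def)
  have \<beta>ij: "\<beta> i j > 0" and \<beta>ji: "\<beta> j i > 0" using \<beta>_pos e dir_edges_swap[OF e] by auto
  have "edge_factor (i, j) = 1 - (R $$ (i, j))\<^sup>2 / (\<beta> i j * \<beta> j i)"
    unfolding edge_factor_def weight_def using sym[OF ij] by (simp add: power2_eq_square)
  also have "\<dots> = (\<beta> i j * \<beta> j i - (R $$ (i, j))\<^sup>2) / (\<beta> i j * \<beta> j i)"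
    using \<beta>ij \<beta>ji by (simp add: field_simps)
  also have "\<dots> = D i / \<beta> i j" using \<beta>_product[OF e] \<beta>ji by simp
  finally show ?thesis .
qed

lemma edge_factor_nonzero: "e \<in> E \<Longrightarrow> edge_factor e \<noteq> 0"
  using edge_factor_eq D_pos \<beta>_pos by (cases e) (fastforce simp: dir_edges_def)

lemma edge_factor_swap: "edge_factor (prod.swap e) = edge_factor e"
  unfolding edge_factor_def by simp

text \<open>Directed edges are indexed by 0..<m so that 2k and 2k+1 are the two orientations of the
  k-th undirected edge; this makes the backtracking part of I - R' block diagonal.\<close>

definition undir_enum :: "nat \<Rightarrow> nat \<times> nat" where
  "undir_enum = (SOME P. bij_betw P {..<card U} U)"

definition edge :: "nat \<Rightarrow> nat \<times> nat" where
  "edge a = (if even a then undir_enum (a div 2) else prod.swap (undir_enum (a div 2)))"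

definition partner :: "nat \<Rightarrow> nat" where
  "partner a = (if even a then Suc a else a - 1)"

lemma undir_enum_bij: "bij_betw undir_enum {..<card U} U"
  using ex_bij_betw_nat_finite[OF finite_undir_edges] unfolding undir_enum_def atLeast0LessThan
  by (rule someI_ex)

lemma undir_enum_fst_less: "k < card U \<Longrightarrow> fst (undir_enum k) < snd (undir_enum k)"
  using undir_enum_bij by (auto simp: bij_betw_def undir_edges_def)

lemma edge_index_div_2_less: "a < m \<Longrightarrow> a div 2 < card U"
  by presburger

lemma edge_in:
  assumes "a < m"
  shows "edge a \<in> E"
proof -
  have "undir_enum (a div 2) \<in> E"
    using bij_betwE[OF undir_enum_bij] edge_index_div_2_less[OF assms] undir_edges_subset by blast
  then show ?thesis using dir_edges_swap by (simp add: edge_def)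
qed

lemma edge_fst_less_iff:
  assumes "a < m"
  shows "fst (edge a) < snd (edge a) \<longleftrightarrow> even a"
  using undir_enum_fst_less[OF edge_index_div_2_less[OF assms]] by (auto simp: edge_def)

lemma inj_on_edge: "inj_on edge {..<m}"
proof (rule inj_onI)
  fix a b assume a: "a \<in> {..<m}" and b: "b \<in> {..<m}" and eq: "edge a = edge b"
  have parity: "even a \<longleftrightarrow> even b" using edge_fst_less_iff a b eq by (metis lessThan_iff)
  then have "undir_enum (a div 2) = undir_enum (b div 2)"
    using eq by (auto simp: edge_def prod_eq_iff split: if_splits)
  then have "a div 2 = b div 2"
    using undir_enum_bij a b by (auto simp: bij_betw_def inj_on_def)
  then show "a = b" using parity by presburger
qed

lemma bij_betw_edge: "bij_betw edge {..<m} E"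
proof -
  have "E \<subseteq> edge ` {..<m}"
  proof
    fix e assume e: "e \<in> E"
    obtain i j where ij: "e = (i, j)" by force
    consider "(i, j) \<in> U" | "(j, i) \<in> U"
      using e ij dir_edges_fst_neq_snd[OF e] sym
      by (fastforce simp: dir_edges_def undir_edges_def)
    then show "e \<in> edge ` {..<m}"
    proof cases
      case 1
      then obtain k where "k < card U" "undir_enum k = (i, j)"
        using undir_enum_bij by (force simp: bij_betw_def)
      then show ?thesis using ij by (intro image_eqI[of _ _ "2 * k"]) (auto simp: edge_def)
    next
      case 2
      then obtain k where "k < card U" "undir_enum k = (j, i)"
        using undir_enum_bij by (force simp: bij_betw_def)
      then show ?thesis using ij by (intro image_eqI[of _ _ "2 * k + 1"]) (auto simp: edge_def)
    qed
  qed
  then show ?thesis using inj_on_edge edge_in by (auto simp: bij_betw_def)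
qed

lemma edge_eq_iff: "a < m \<Longrightarrow> b < m \<Longrightarrow> edge a = edge b \<longleftrightarrow> a = b"
  using inj_on_edge by (auto simp: inj_on_def)

lemma partner_less: "a < m \<Longrightarrow> partner a < m"
  by (auto simp: partner_def elim!: evenE)

lemma partner_neq: "partner a \<noteq> a"
  by (auto simp: partner_def elim: oddE)

lemma partner_partner: "partner (partner a) = a"
  by (cases "even a") (auto simp: partner_def elim: oddE)

lemma edge_partner: "edge (partner a) = prod.swap (edge a)"
  by (cases "even a") (auto simp: partner_def edge_def elim: oddE)

lemma edge_reverse_iff:
  assumes "a < m" "b < m"
  shows "edge b = prod.swap (edge a) \<longleftrightarrow> b = partner a"
  using edge_eq_iff[OF assms(2) partner_less[OF assms(1)]] edge_partner[of a] by auto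

lemma sum_edge_reindex: "(\<Sum>b = 0..<m. H (edge b)) = (\<Sum>e\<in>E. H e)"
  using sum.reindex_bij_betw[OF bij_betw_edge, of H] by (simp add: atLeast0LessThan)

lemma sum_dir_edges_from:
  assumes "i < n"
  shows "(\<Sum>e\<in>E. if fst e = i then F e else 0) = (\<Sum>k\<in>nbrs n R i. F (i, k))"
proof -
  have "(\<Sum>e\<in>E. if fst e = i then F e else 0) = (\<Sum>e\<in>{e\<in>E. fst e = i}. F e)"
    using finite_dir_edges by (simp add: sum.inter_filter)
  also have "{e\<in>E. fst e = i} = Pair i ` nbrs n R i"
    using assms by (auto simp: dir_edges_def nbrs_def)
  also have "(\<Sum>e\<in>Pair i ` nbrs n R i. F e) = (\<Sum>k\<in>nbrs n R i. F (i, k))"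
    by (subst sum.reindex) (auto simp: inj_on_def)
  finally show ?thesis .
qed

definition backtrackless_mat :: "real mat" where
  "backtrackless_mat = mat m m (\<lambda>(a, b). backtrackless (edge a) (edge b))"

text \<open>The product head_mat * tail_mat counts every continuation of an edge, backtracking ones
  included; backtrack_mat adds the backtracking ones back, so that
  I - backtrackless_mat = backtrack_mat - head_mat * tail_mat.\<close>

definition backtrack_mat :: "real mat" where
  "backtrack_mat = mat m m (\<lambda>(a, b). if a = b then 1 else if b = partner a then weight (edge b) else 0)"

definition head_mat :: "real mat" where
  "head_mat = mat m n (\<lambda>(a, v). if snd (edge a) = v then 1 else 0)"

definition tail_mat :: "real mat" where
  "tail_mat = mat n m (\<lambda>(v, b). if fst (edge b) = v then weight (edge b) else 0)"

definition backtrack_mat_inv :: "real mat" where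
  "backtrack_mat_inv = mat m m (\<lambda>(a, b).
     if a = b then 1 / edge_factor (edge a)
     else if b = partner a then - weight (edge b) / edge_factor (edge a) else 0)"

definition inv_D_mat :: "real mat" where
  "inv_D_mat = mat n n (\<lambda>(v, w). if v = w then 1 / D v else 0)"

lemma head_tail_index:
  assumes a: "a < m" and b: "b < m"
  shows "(head_mat * tail_mat) $$ (a, b) = (if snd (edge a) = fst (edge b) then weight (edge b) else 0)"
proof -
  have "snd (edge a) < n" using edge_in[OF a] by (auto simp: dir_edges_def)
  then show ?thesis
    unfolding head_mat_def tail_mat_def using a b
    by (subst index_mult_mat_mat) (auto simp: sum_eq_single_point[where a = "snd (edge a)"])
qed

lemma one_minus_backtrackless_mat_eq: "1\<^sub>m m - backtrackless_mat = backtrack_mat - head_mat * tail_mat"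
proof (rule eq_matI)
  fix a b assume "a < dim_row (backtrack_mat - head_mat * tail_mat)" "b < dim_col (backtrack_mat - head_mat * tail_mat)"
  then have a: "a < m" and b: "b < m" by (auto simp: backtrack_mat_def head_mat_def tail_mat_def)
  have no_loop: "fst (edge a) \<noteq> snd (edge a)" using dir_edges_fst_neq_snd edge_in a by auto
  have reverse: "snd (edge a) = fst (edge b) \<and> fst (edge a) = snd (edge b) \<longleftrightarrow> b = partner a"
    using edge_reverse_iff[OF a b] by (cases "edge a", cases "edge b") auto
  show "(1\<^sub>m m - backtrackless_mat) $$ (a, b) = (backtrack_mat - head_mat * tail_mat) $$ (a, b)"
    using a b no_loop reverse head_tail_index[OF a b] partner_neq[of a]
    by (auto simp: backtrackless_mat_def backtrack_mat_def head_mat_def tail_mat_def backtrackless_def)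
qed (auto simp: backtrackless_mat_def backtrack_mat_def head_mat_def tail_mat_def)

lemma backtrack_mat_inverse: "backtrack_mat * backtrack_mat_inv = 1\<^sub>m m"
proof (rule eq_matI)
  fix a b assume "a < dim_row (1\<^sub>m m)" "b < dim_col (1\<^sub>m m)"
  then have a: "a < m" and b: "b < m" by auto
  have pa: "partner a < m" using partner_less a .
  have f_nz: "edge_factor (edge a) \<noteq> 0" using edge_factor_nonzero edge_in a by auto
  have f_partner: "edge_factor (edge (partner a)) = edge_factor (edge a)"
    using edge_partner edge_factor_swap by simp
  have "(backtrack_mat * backtrack_mat_inv) $$ (a, b)
     = (if a = b then 1 / edge_factor (edge a) else if b = partner a then - weight (edge b) / edge_factor (edge a) else 0)
       + weight (edge (partner a)) * (if partner a = b then 1 / edge_factor (edge (partner a))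
           else if b = a then - weight (edge b) / edge_factor (edge (partner a)) else 0)"
    unfolding backtrack_mat_def backtrack_mat_inv_def using a b pa partner_neq[of a]
    by (subst index_mult_mat_mat) (auto simp: partner_partner sum_eq_two_points[where a = a and b = "partner a"])
  also have "\<dots> = (if a = b then 1 else 0)"
    using f_nz f_partner partner_neq[of a] edge_partner[of a]
    by (auto simp: edge_factor_def field_simps)
  finally show "(backtrack_mat * backtrack_mat_inv) $$ (a, b) = 1\<^sub>m m $$ (a, b)" using a b by simp
qed (auto simp: backtrack_mat_def backtrack_mat_inv_def)

lemma backtrack_inv_head_index:
  assumes a: "a < m" and w: "w < n"
  shows "(backtrack_mat_inv * head_mat) $$ (a, w)
    = ((if snd (edge a) = w then 1 else 0) - weight (prod.swap (edge a)) * (if fst (edge a) = w then 1 else 0))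
      / edge_factor (edge a)"
proof -
  have pa: "partner a < m" using partner_less a .
  have "(backtrack_mat_inv * head_mat) $$ (a, w)
     = 1 / edge_factor (edge a) * (if snd (edge a) = w then 1 else 0)
       + (- weight (edge (partner a)) / edge_factor (edge a)) * (if snd (edge (partner a)) = w then 1 else 0)"
    unfolding backtrack_mat_inv_def head_mat_def using a w pa partner_neq[of a]
    by (subst index_mult_mat_mat) (auto simp: partner_partner sum_eq_two_points[where a = a and b = "partner a"])
  then show ?thesis
    by (auto simp: edge_partner add_divide_distrib[symmetric] diff_divide_distrib[symmetric])
qed

lemma tail_inv_head_index_nbrs:
  assumes v: "v < n" and w: "w < n"
  shows "(tail_mat * (backtrack_mat_inv * head_mat)) $$ (v, w)
    = (\<Sum>k\<in>nbrs n R v. weight (v, k) *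
        (((if k = w then 1 else 0) - weight (k, v) * (if v = w then 1 else 0)) / edge_factor (v, k)))"
proof -
  define F where "F e = weight e *
    (((if snd e = w then 1 else 0) - weight (prod.swap e) * (if fst e = w then 1 else 0)) / edge_factor e)" for e
  have "(tail_mat * (backtrack_mat_inv * head_mat)) $$ (v, w)
      = (\<Sum>b = 0..<m. (if fst (edge b) = v then weight (edge b) else 0) * (backtrack_mat_inv * head_mat) $$ (b, w))"
    using v w by (simp add: tail_mat_def backtrack_mat_inv_def head_mat_def scalar_prod_def)
  also have "\<dots> = (\<Sum>b = 0..<m. (\<lambda>e. if fst e = v then F e else 0) (edge b))"
    by (rule sum.cong) (use backtrack_inv_head_index w in \<open>auto simp: F_def\<close>)
  also have "\<dots> = (\<Sum>k\<in>nbrs n R v. F (v, k))"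
    using sum_edge_reindex[of "\<lambda>e. if fst e = v then F e else 0"] sum_dir_edges_from[OF v, of F]
    by simp
  finally show ?thesis by (simp add: F_def)
qed

lemma tail_inv_head_index:
  assumes v: "v < n" and w: "w < n"
  shows "(tail_mat * (backtrack_mat_inv * head_mat)) $$ (v, w)
    = (if v = w then - (1 - D v) / D v else R $$ (v, w) / D v)"
proof (cases "v = w")
  case True
  have "(tail_mat * (backtrack_mat_inv * head_mat)) $$ (v, w)
      = (\<Sum>k\<in>nbrs n R v. - ((R $$ (v, k))\<^sup>2 / \<beta> k v) / D v)"
    unfolding tail_inv_head_index_nbrs[OF v w]
  proof (rule sum.cong)
    fix k assume k: "k \<in> nbrs n R v"
    have e: "(v, k) \<in> E" using nbrs_imp_dir_edge v k .
    have "k < n" and "k \<noteq> v" using k diag_zero v by (auto simp: nbrs_def)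
    moreover have "\<beta> v k > 0" "\<beta> k v > 0" "D v > 0"
      using \<beta>_pos e dir_edges_swap[OF e] D_pos v by auto
    ultimately show "weight (v, k) * (((if k = w then 1 else 0) - weight (k, v) * (if v = w then 1 else 0))
        / edge_factor (v, k)) = - ((R $$ (v, k))\<^sup>2 / \<beta> k v) / D v"
      using True edge_factor_eq[OF e] sym[of k v] v
      by (simp add: weight_def field_simps power2_eq_square)
  qed simp
  also have "\<dots> = - (\<Sum>k\<in>nbrs n R v. (R $$ (v, k))\<^sup>2 / \<beta> k v) / D v"
    by (simp add: sum_divide_distrib sum_negf)
  also have "\<dots> = - (1 - D v) / D v" using weighted_degree[OF v] by simp
  finally show ?thesis using True by simp
next
  case False
  have "(tail_mat * (backtrack_mat_inv * head_mat)) $$ (v, w)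
      = (\<Sum>k\<in>nbrs n R v. if k = w then weight (v, k) / edge_factor (v, k) else 0)"
    unfolding tail_inv_head_index_nbrs[OF v w] using False by (intro sum.cong) auto
  also have "\<dots> = R $$ (v, w) / D v"
  proof (cases "w \<in> nbrs n R v")
    case True
    have e: "(v, w) \<in> E" using nbrs_imp_dir_edge v True .
    then have "\<beta> v w > 0" using \<beta>_pos by auto
    then show ?thesis using True edge_factor_eq[OF e] D_pos[OF v] finite_nbrs by (simp add: weight_def)
  next
    case False
    then show ?thesis using w finite_nbrs by (simp add: nbrs_def)
  qed
  finally show ?thesis using False by simp
qed

lemma schur_complement_eq: "1\<^sub>m n - tail_mat * (backtrack_mat_inv * head_mat) = inv_D_mat * (1\<^sub>m n - R)"
proof (rule eq_matI)
  fix v w assume "v < dim_row (inv_D_mat * (1\<^sub>m n - R))" "w < dim_col (inv_D_mat * (1\<^sub>m n - R))"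
  then have v: "v < n" and w: "w < n" using carrier by (auto simp: inv_D_mat_def)
  have "(inv_D_mat * (1\<^sub>m n - R)) $$ (v, w) = (1\<^sub>m n - R) $$ (v, w) / D v"
    using v w carrier
    by (auto simp: inv_D_mat_def scalar_prod_def sum_eq_single_point[where a = v])
  then show "(1\<^sub>m n - tail_mat * (backtrack_mat_inv * head_mat)) $$ (v, w) = (inv_D_mat * (1\<^sub>m n - R)) $$ (v, w)"
    using v w carrier tail_inv_head_index[OF v w] D_pos[OF v] diag_zero[OF v]
    by (auto simp: tail_mat_def head_mat_def field_simps)
qed (use carrier in \<open>auto simp: inv_D_mat_def tail_mat_def head_mat_def\<close>)

lemma det_inv_D_mat: "det inv_D_mat = (\<Prod>i<n. 1 / D i)"
  by (subst det_diagonal) (auto simp: inv_D_mat_def)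

text \<open>Rows 2k, 2k+1 of backtrack_mat form a 2x2 block [1, w(rev e); w(e), 1] with e = edge (2k);
  its LU factorisation has the edge factor of e as its only nontrivial pivot.\<close>

definition backtrack_lower :: "real mat" where
  "backtrack_lower = mat m m (\<lambda>(a, b). if a = b then 1 else if odd a \<and> b = a - 1 then weight (edge b) else 0)"

definition backtrack_upper :: "real mat" where
  "backtrack_upper = mat m m (\<lambda>(a, b).
     if a = b then (if odd a then edge_factor (edge a) else 1)
     else if even a \<and> b = a + 1 then weight (edge b) else 0)"

lemma backtrack_mat_LU: "backtrack_mat = backtrack_lower * backtrack_upper"
proof (rule eq_matI)
  fix a b assume "a < dim_row (backtrack_lower * backtrack_upper)" "b < dim_col (backtrack_lower * backtrack_upper)"
  then have a: "a < m" and b: "b < m" by (auto simp: backtrack_lower_def backtrack_upper_def)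
  have LU: "(backtrack_lower * backtrack_upper) $$ (a, b)
    = (\<Sum>c = 0..<m. (if a = c then 1 else if odd a \<and> c = a - 1 then weight (edge c) else 0) *
        (if c = b then (if odd c then edge_factor (edge c) else 1)
         else if even c \<and> b = c + 1 then weight (edge b) else 0))"
    unfolding backtrack_lower_def backtrack_upper_def using a b by (subst index_mult_mat_mat) auto
  show "backtrack_mat $$ (a, b) = (backtrack_lower * backtrack_upper) $$ (a, b)"
  proof (cases "even a")
    case True
    then show ?thesis
      unfolding LU using a b by (subst sum_eq_single_point[where a = a]) (auto simp: backtrack_mat_def partner_def)
  next
    case False
    then have a_pos: "a > 0" by (auto elim: oddE)
    have "edge (a - 1) = prod.swap (edge a)" using edge_partner[of a] False by (simp add: partner_def)
    then show ?thesis
      unfolding LU using a b a_pos False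
      by (subst sum_eq_two_points[where a = a and b = "a - 1"])
        (auto simp: backtrack_mat_def partner_def edge_factor_def)
  qed
qed (auto simp: backtrack_mat_def backtrack_lower_def backtrack_upper_def)

lemma det_backtrack_mat: "det backtrack_mat = (\<Prod>e\<in>U. edge_factor e)"
proof -
  have L: "backtrack_lower \<in> carrier_mat m m" and Up: "backtrack_upper \<in> carrier_mat m m"
    by (auto simp: backtrack_lower_def backtrack_upper_def)
  have "det backtrack_lower = prod_list (diag_mat backtrack_lower)"
    by (rule det_lower_triangular[OF _ L]) (auto simp: backtrack_lower_def)
  then have "det backtrack_lower = 1" by (simp add: backtrack_lower_def prod_list_diag_prod)
  moreover have "det backtrack_upper = (\<Prod>a<m. if odd a then edge_factor (edge a) else 1)"
    using det_upper_triangular[OF _ Up]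
    by (auto simp: upper_triangular_def backtrack_upper_def prod_list_diag_prod atLeast0LessThan)
  moreover have "\<dots> = (\<Prod>k<card U. edge_factor (undir_enum k))"
    unfolding prod_lessThan_double by (intro prod.cong) (auto simp: edge_def edge_factor_swap)
  moreover have "\<dots> = (\<Prod>e\<in>U. edge_factor e)"
    using prod.reindex_bij_betw[OF undir_enum_bij] .
  ultimately show ?thesis unfolding backtrack_mat_LU det_mult[OF L Up] by simp
qed

lemma det_on_reindex_backtrackless:
  "det_on E (\<lambda>e f. (if e = f then 1 else 0) - backtrackless e f) = det (1\<^sub>m m - backtrackless_mat)"
proof -
  have "det_on E (\<lambda>e f. (if e = f then 1 else 0) - backtrackless e f)
      = det (mat m m (\<lambda>(a, b). (if edge a = edge b then 1 else 0) - backtrackless (edge a) (edge b)))"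
    using bij_betw_edge by (intro det_on_reindex) (simp add: atLeast0LessThan)
  also have "mat m m (\<lambda>(a, b). (if edge a = edge b then 1 else 0) - backtrackless (edge a) (edge b))
      = 1\<^sub>m m - backtrackless_mat"
    by (rule eq_matI) (auto simp: backtrackless_mat_def edge_eq_iff)
  finally show ?thesis .
qed

theorem det_on_one_minus_backtrackless:
  "det_on E (\<lambda>e f. (if e = f then 1 else 0) - backtrackless e f)
    = (\<Prod>(i, j)\<in>U. D i / \<beta> i j) * (\<Prod>i<n. 1 / D i) * det (1\<^sub>m n - R)"
proof -
  have carriers: "backtrack_mat \<in> carrier_mat m m" "backtrack_mat_inv \<in> carrier_mat m m"
    "head_mat \<in> carrier_mat m n" "tail_mat \<in> carrier_mat n m" "inv_D_mat \<in> carrier_mat n n"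
    "1\<^sub>m n - R \<in> carrier_mat n n"
    using carrier
    by (auto simp: backtrack_mat_def backtrack_mat_inv_def head_mat_def tail_mat_def inv_D_mat_def)
  have "(\<Prod>e\<in>U. edge_factor e) = (\<Prod>(i, j)\<in>U. D i / \<beta> i j)"
    by (intro prod.cong) (auto intro: edge_factor_eq[OF subsetD[OF undir_edges_subset]])
  then show ?thesis
    unfolding det_on_reindex_backtrackless one_minus_backtrackless_mat_eq
      det_minus_mult_eq_schur_complement[OF carriers(1,2) backtrack_mat_inverse carriers(3,4)]
      schur_complement_eq det_mult[OF carriers(5,6)] det_backtrack_mat det_inv_D_mat
    by simp
qed

end

locale gabp_model =
  fixes n :: nat and R :: "real mat"
  assumes carrier: "R \<in> carrier_mat n n"
    and sym: "\<forall>i<n. \<forall>j<n. R $$ (i, j) = R $$ (j, i)"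
    and diag_zero: "\<forall>i<n. R $$ (i, i) = 0"
    and spectral_radius_abs: "spectral_radius (map_mat (\<lambda>x. complex_of_real \<bar>x\<bar>) R) < 1"
begin

definition cavity_prec :: "nat \<Rightarrow> nat \<Rightarrow> real" where
  "cavity_prec i j = 1 - alpha_excl n R i j"

definition marginal_prec :: "nat \<Rightarrow> real" where
  "marginal_prec i = 1 - (\<Sum>k\<in>nbrs n R i. alpha n R k i)"

lemma supersolution:
  obtains x where "\<forall>i<n. x i > 0" and "\<forall>i<n. (\<Sum>j = 0..<n. \<bar>R $$ (i, j)\<bar> * x j) \<le> x i - 1 / 2"
proof -
  have A: "map_mat abs R \<in> carrier_mat n n" using carrier by simp
  have "map_mat complex_of_real (map_mat abs R) = map_mat (\<lambda>x. complex_of_real \<bar>x\<bar>) R"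
    by (rule eq_matI) auto
  then obtain x where "\<And>i. i < n \<Longrightarrow> x i > 0"
    and "\<And>i. i < n \<Longrightarrow> (\<Sum>j = 0..<n. map_mat abs R $$ (i, j) * x j) \<le> x i - 1 / 2"
    using nonneg_supersolution_of_spectral_radius_less_1[OF A] spectral_radius_abs carrier by auto
  then show ?thesis using that carrier by auto
qed

lemma cavity_prec_pos:
  assumes "i < n" "j < n"
  shows "cavity_prec i j > 0"
proof -
  obtain x where "\<forall>i<n. x i > 0" "\<forall>i<n. (\<Sum>j = 0..<n. \<bar>R $$ (i, j)\<bar> * x j) \<le> x i - 1 / 2"
    by (rule supersolution)
  from one_minus_alpha_excl_pos[OF sym this assms] show ?thesis by (simp add: cavity_prec_def)
qed

lemma marginal_prec_pos:
  assumes "i < n"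
  shows "marginal_prec i > 0"
proof -
  obtain x where "\<forall>i<n. x i > 0" "\<forall>i<n. (\<Sum>j = 0..<n. \<bar>R $$ (i, j)\<bar> * x j) \<le> x i - 1 / 2"
    by (rule supersolution)
  from one_minus_alpha_sum_pos[OF sym this assms] show ?thesis by (simp add: marginal_prec_def)
qed

lemma alpha_mult_cavity_prec:
  assumes "i < n" "j < n"
  shows "alpha n R i j * cavity_prec i j = (R $$ (i, j))\<^sup>2"
proof -
  obtain x where "\<forall>i<n. x i > 0" "\<forall>i<n. (\<Sum>j = 0..<n. \<bar>R $$ (i, j)\<bar> * x j) \<le> x i - 1 / 2"
    by (rule supersolution)
  from alpha_fixed_point[OF sym this assms] show ?thesis
    using cavity_prec_pos[OF assms] by (simp add: cavity_prec_def)
qed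

end

sublocale gabp_model \<subseteq> weighted_ihara_bass n R cavity_prec marginal_prec
proof
  fix i j assume e: "(i, j) \<in> dir_edges n R"
  then have i: "i < n" and j: "j < n" and j_nbr: "j \<in> nbrs n R i" by (auto simp: dir_edges_def nbrs_def)
  show "cavity_prec i j > 0" using cavity_prec_pos[OF i j] .
  have "cavity_prec i j = marginal_prec i + alpha n R j i"
    using finite_nbrs j_nbr by (simp add: cavity_prec_def marginal_prec_def alpha_excl_def sum.remove)
  then show "cavity_prec i j * cavity_prec j i - (R $$ (i, j))\<^sup>2 = marginal_prec i * cavity_prec j i"
    using alpha_mult_cavity_prec[OF j i] sym i j by (simp add: algebra_simps)
next
  fix i assume i: "i < n"
  have "(R $$ (i, k))\<^sup>2 / cavity_prec k i = alpha n R k i" if "k \<in> nbrs n R i" for k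
  proof -
    have k: "k < n" using that by (simp add: nbrs_def)
    then show ?thesis
      using alpha_mult_cavity_prec[OF k i] cavity_prec_pos[OF k i] sym i by (simp add: field_simps)
  qed
  then show "(\<Sum>k\<in>nbrs n R i. (R $$ (i, k))\<^sup>2 / cavity_prec k i) = 1 - marginal_prec i"
    by (simp add: marginal_prec_def)
qed (use carrier sym diag_zero marginal_prec_pos in auto)

context gabp_model
begin

lemma Z_bp_eq: "Z_bp n R = (\<Prod>(i, j)\<in>U. marginal_prec i / cavity_prec i j) * (\<Prod>i<n. 1 / marginal_prec i)"
proof -
  have Z_node: "Z_node n R i = 1 / marginal_prec i" for i
    by (simp add: Z_node_def marginal_prec_def inverse_eq_divide)
  have edge_term: "Z_edge n R i j / (Z_node n R i * Z_node n R j) = marginal_prec i / cavity_prec i j"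
    if u: "(i, j) \<in> U" for i j
  proof -
    have e: "(i, j) \<in> E" and e': "(j, i) \<in> E"
      using u undir_edges_subset dir_edges_swap by force+
    then have "marginal_prec i > 0" "marginal_prec j > 0" "cavity_prec j i > 0"
      using D_pos \<beta>_pos[OF e'] by (auto simp: dir_edges_def)
    moreover have "Z_edge n R i j = 1 / (marginal_prec i * cavity_prec j i)"
      using \<beta>_product[OF e] by (simp add: Z_edge_def cavity_prec_def inverse_eq_divide power2_eq_square)
    ultimately have "Z_edge n R i j / (Z_node n R i * Z_node n R j) = marginal_prec j / cavity_prec j i"
      by (simp add: Z_node field_simps)
    also have "\<dots> = marginal_prec i / cavity_prec i j"
      using edge_factor_eq[OF e] edge_factor_eq[OF e'] edge_factor_swap[of "(i, j)"] by simp
    finally show ?thesis .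
  qed
  have "(\<Prod>(i, j)\<in>U. Z_edge n R i j / (Z_node n R i * Z_node n R j))
      = (\<Prod>(i, j)\<in>U. marginal_prec i / cavity_prec i j)"
    by (rule prod.cong) (auto simp: edge_term)
  then show ?thesis
    unfolding Z_bp_def by (simp add: Z_node mult.commute)
qed

lemma Z_bp_pos: "Z_bp n R > 0"
proof -
  have "(\<Prod>(i, j)\<in>U. marginal_prec i / cavity_prec i j) > 0"
  proof (rule prod_pos)
    fix e assume "e \<in> U"
    then have "e \<in> E" using undir_edges_subset by blast
    then show "(case e of (i, j) \<Rightarrow> marginal_prec i / cavity_prec i j) > 0"
      using D_pos \<beta>_pos by (cases e) (auto simp: dir_edges_def)
  qed
  moreover have "(\<Prod>i<n. 1 / marginal_prec i) > 0"
    using D_pos by (intro prod_pos) simp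
  ultimately show ?thesis unfolding Z_bp_eq by simp
qed

theorem inverse_det_one_minus_eq:
  "inverse (det (1\<^sub>m n - R)) = Z_bp n R * inverse (det_on E (\<lambda>e f. (if e = f then 1 else 0) - R_prime n R e f))"
proof -
  have "R_prime n R = backtrackless"
    by (intro ext) (simp add: R_prime_def r_prime_def backtrackless_def weight_def cavity_prec_def)
  then have "det_on E (\<lambda>e f. (if e = f then 1 else 0) - R_prime n R e f) = Z_bp n R * det (1\<^sub>m n - R)"
    by (simp add: det_on_one_minus_backtrackless Z_bp_eq)
  then show ?thesis using Z_bp_pos by (simp add: inverse_mult_distrib)
qed

end

theorem theorem5:
  fixes n :: nat and R :: "real mat"
  assumes "R \<in> carrier_mat n n"
    and "\<forall>i<n. \<forall>j<n. R $$ (i, j) = R $$ (j, i)"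
    and "\<forall>i<n. R $$ (i, i) = 0"
    and "spectral_radius (map_mat (\<lambda>x. complex_of_real \<bar>x\<bar>) R) < 1"
  shows "inverse (det (1\<^sub>m n - R)) =
         Z_bp n R * inverse (det_on (dir_edges n R)
            (\<lambda>e f. (if e = f then 1 else 0) - R_prime n R e f))"
proof -
  interpret gabp_model n R using assms by (rule gabp_model.intro)
  show ?thesis by (rule inverse_det_one_minus_eq)
qed

end
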